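(* Let $X$ and $Y$ be infinite metrizable compact spaces and let $Z$ be a metrizable space containing a homeomorphic copy of $\mathbb R$. Then a compact space $K$ embeds homeomorphically into $S(X\times Y,Z)$ if and only if $K$ is metrizable.
   Context: All compact spaces are assumed Hausdorff. For topological spaces $X,Y,Z$, a function $f:X\times Y\to Z$ is separately continuous if $y\mapsto f(x,y)$ is continuous for every $x\in X$ and $x\mapsto f(x,y)$ is continuous for every $y\in Y$. $S(X\times Y,Z)$ denotes the set of all separately continuous functions $X\times Y\to Z$. For $p=(a,b)\in X\times Y$, the cross of $p$ is $\mathrm{cr}\{p\}=(\{a\}\times Y)\cup(X\times\{b\})$. For $X,Y$ compact and $Z$ metrizable with a compatible metric $d$, $S(X\times Y,Z)$ carries the topology generated by the family of extended pseudometrics $d_c(s,t)=\sup_{p\in\mathrm{cr}\{c\}} d(s(p),t(p))$, $c\in X\times Y$ (the cross-uniform topology); it coincides with the cross-open topology, generated by the subbase of sets $\{s: s(A)\subseteq W\}$ with $W$ open in $Z$ and $A=\overline{G}\cap C$, where $C=\mathrm{cr}\{p\}$ for some $p$ and $G$ is open in $C$. *)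

theory Defs
  imports "HOL-Analysis.Analysis"
begin

text \<open>Separately continuous functions $X \times Y \to Z$, represented as extensional
  functions on the carrier $X \times Y$ (undefined outside the carrier).\<close>
definition sep_cont :: "'a topology \<Rightarrow> 'b topology \<Rightarrow> 'c topology \<Rightarrow> ('a \<times> 'b \<Rightarrow> 'c) set" where
  "sep_cont X Y Z =
     {f. f \<in> extensional (topspace X \<times> topspace Y)
       \<and> f \<in> topspace X \<times> topspace Y \<rightarrow> topspace Z
       \<and> (\<forall>x\<in>topspace X. continuous_map Y Z (\<lambda>y. f (x, y)))
       \<and> (\<forall>y\<in>topspace Y. continuous_map X Z (\<lambda>x. f (x, y)))}"

definition cross :: "'a topology \<Rightarrow> 'b topology \<Rightarrow> 'a \<times> 'b \<Rightarrow> ('a \<times> 'b) set" where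
  "cross X Y p = ({fst p} \<times> topspace Y) \<union> (topspace X \<times> {snd p})"

definition cross_sets :: "'a topology \<Rightarrow> 'b topology \<Rightarrow> ('a \<times> 'b) set set" where
  "cross_sets X Y =
     {A. \<exists>p\<in>topspace X \<times> topspace Y. \<exists>G.
           openin (subtopology (prod_topology X Y) (cross X Y p)) G
         \<and> A = (prod_topology X Y closure_of G) \<inter> cross X Y p}"

definition cross_open_topology ::
  "'a topology \<Rightarrow> 'b topology \<Rightarrow> 'c topology \<Rightarrow> ('a \<times> 'b \<Rightarrow> 'c) topology" where
  "cross_open_topology X Y Z =
     topology_generated_by
       {{s \<in> sep_cont X Y Z. s ` A \<subseteq> W} | A W. A \<in> cross_sets X Y \<and> openin Z W}"

end

theory Submission
  imports Defs
begin

text \<open>Evaluation at a point is continuous for the cross-open topology, and a separately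
  continuous function is determined by its values on a product of dense sets. So for separable
  \<open>X\<close> and \<open>Y\<close>, restriction to a countable dense product \<open>D\<close> maps an embedded compact \<open>K\<close>
  continuously and injectively into the metrizable space \<open>Z\<^sup>D\<close>, and \<open>K\<close> is metrizable.

  Conversely, for compact metric \<open>K\<close> take continuous \<open>a\<^sub>n : K \<rightarrow> [0,1]\<close> separating points, and
  continuous \<open>\<psi>\<^sub>n\<close> on \<open>X\<close> vanishing at \<open>p\<^sub>0, \<dots>, p\<^sub>n\<^sub>-\<^sub>1\<close> with \<open>\<psi>\<^sub>n(p\<^sub>n) = 1\<close> for distinct
  points \<open>p\<^sub>n\<close> (this is where \<open>X\<close> must be infinite). Then
  \<open>G(k,x) = \<Sum> 2\<^sup>-\<^sup>n a\<^sub>n(k) \<psi>\<^sub>n(x)\<close> is jointly continuous and \<open>k \<mapsto> G(k,\<cdot>)\<close> is injective.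
  With a copy \<open>h\<close> of \<open>\<real>\<close> in \<open>Z\<close>, the map sending \<open>k\<close> to \<open>(x,y) \<mapsto> h(G(k,x))\<close> is continuous
  into the cross-open topology, because the generating sets \<open>A\<close> are compact (tube lemma), and it
  is injective; as \<open>K\<close> is compact and the target Hausdorff, it is an embedding.\<close>

lemma metrizable_spaceE:
  assumes "metrizable_space X"
  obtains m where "X = mtopology_of m"
  using assms by (metis Metric_space.mtopology_of metrizable_space_def)

lemma compact_metrizable_imp_separable_space:
  assumes "compact_space X" "metrizable_space X"
  shows "separable_space X"
proof -
  obtain m where X: "X = mtopology_of m"
    using assms(2) by (rule metrizable_spaceE)
  interpret Metric_space "mspace m" "mdist m" by simp
  have "compactin mtopology (mspace m)"
    using assms(1) by (simp add: X compact_space_def mtopology_of_def)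
  then have "mtotally_bounded (mspace m)"
    by (rule compactin_imp_mtotally_bounded)
  then have "\<forall>n. \<exists>F. finite F \<and> F \<subseteq> mspace m \<and> mspace m \<subseteq> (\<Union>x\<in>F. mball x (1 / Suc n))"
    unfolding mtotally_bounded_def by simp
  then obtain F where F: "\<And>n. finite (F n) \<and> F n \<subseteq> mspace m
                                \<and> mspace m \<subseteq> (\<Union>x\<in>F n. mball x (1 / Suc n))"
    by metis
  have "x \<in> mtopology closure_of (\<Union>n. F n)" if x: "x \<in> mspace m" for x
  proof -
    have "\<exists>y\<in>\<Union>n. F n. y \<in> mball x r" if "r > 0" for r
    proof -
      obtain n where n: "1 / Suc n < r"
        using \<open>r > 0\<close> by (metis nat_approx_posE)
      obtain y where "y \<in> F n" "x \<in> mball y (1 / Suc n)"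
        using F x by blast
      with n have "y \<in> mball x r"
        by (auto simp: commute)
      with \<open>y \<in> F n\<close> show ?thesis
        by blast
    qed
    with x show ?thesis
      by (simp add: metric_closure_of)
  qed
  then have "X closure_of (\<Union>n. F n) = topspace X"
    using closure_of_subset_topspace by (fastforce simp: X mtopology_of_def)
  moreover have "countable (\<Union>n. F n)" "(\<Union>n. F n) \<subseteq> topspace X"
    using F by (auto simp: countable_finite X)
  ultimately show ?thesis
    unfolding separable_space_def by blast
qed

lemma metrizable_space_of_continuous_injective:
  assumes "compact_space K" "metrizable_space M" "continuous_map K M f" "inj_on f (topspace K)"
  shows "metrizable_space K"
proof -
  have "embedding_map K M f"
    using assms by (intro continuous_imp_embedding_map) (auto simp: metrizable_imp_Hausdorff_space)
  then have "K homeomorphic_space subtopology M (f ` topspace K)"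
    by (rule embedding_map_imp_homeomorphic_space)
  then show ?thesis
    using homeomorphic_metrizable_space metrizable_space_subtopology[OF assms(2)] by blast
qed

lemma topspace_cross_open_topology_subset:
  "topspace (cross_open_topology X Y Z) \<subseteq> sep_cont X Y Z"
  unfolding cross_open_topology_def by auto

text \<open>Without a point of \<open>X \<times> Y\<close> there are no crosses, so the subbase would be empty.\<close>

lemma topspace_cross_open_topology:
  assumes "topspace X \<noteq> {}" "topspace Y \<noteq> {}"
  shows "topspace (cross_open_topology X Y Z) = sep_cont X Y Z"
proof -
  obtain a b where "a \<in> topspace X" "b \<in> topspace Y"
    using assms by blast
  then have "{} \<in> cross_sets X Y"
    unfolding cross_sets_def by force
  then have "sep_cont X Y Z \<in> {{s \<in> sep_cont X Y Z. s ` A \<subseteq> W} | A W. A \<in> cross_sets X Y \<and> openin Z W}"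
    by force
  then show ?thesis
    using topspace_cross_open_topology_subset[of X Y Z]
    unfolding cross_open_topology_def by auto
qed

lemma closedin_cross:
  assumes "t1_space X" "t1_space Y" "p \<in> topspace X \<times> topspace Y"
  shows "closedin (prod_topology X Y) (cross X Y p)"
  unfolding cross_def using assms
  by (intro closedin_Un) (auto simp: closedin_prod_Times_iff t1_space_closedin_singleton)

lemma closedin_cross_sets:
  assumes "t1_space X" "t1_space Y" "A \<in> cross_sets X Y"
  shows "closedin (prod_topology X Y) A"
proof -
  obtain p G where "p \<in> topspace X \<times> topspace Y" "A = (prod_topology X Y closure_of G) \<inter> cross X Y p"
    using assms(3) unfolding cross_sets_def by blast
  then show ?thesis
    using assms(1,2) by (simp add: closedin_Int closedin_cross)
qed

lemma continuous_map_on_cross: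
  assumes s: "s \<in> sep_cont X Y Z" and "t1_space X" "t1_space Y"
    and p: "p \<in> topspace X \<times> topspace Y"
  shows "continuous_map (subtopology (prod_topology X Y) (cross X Y p)) Z s"
proof -
  obtain a b where ab: "p = (a, b)" "a \<in> topspace X" "b \<in> topspace Y"
    using p by auto
  define T where "T i = (if i then {a} \<times> topspace Y else topspace X \<times> {b})" for i
  have cross: "cross X Y p = T True \<union> T False"
    by (simp add: T_def cross_def ab)
  show ?thesis
  proof (rule pasting_lemma_closed[where I="{True, False}" and T=T and f="\<lambda>_. s"])
    fix i :: bool
    show "closedin (subtopology (prod_topology X Y) (cross X Y p)) (T i)"
      using assms ab
      by (intro closedin_subset_topspace)
         (auto simp: T_def cross_def closedin_prod_Times_iff t1_space_closedin_singleton)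
    have "continuous_map (subtopology (prod_topology X Y) (T i)) Z s"
    proof (cases i)
      case True
      have "continuous_map Y Z (\<lambda>y. s (a, y))"
        using s ab unfolding sep_cont_def by blast
      then have "continuous_map (subtopology (prod_topology X Y) (T i)) Z ((\<lambda>y. s (a, y)) \<circ> snd)"
        by (rule continuous_map_compose[OF continuous_map_from_subtopology[OF continuous_map_snd]])
      then show ?thesis
        by (rule continuous_map_eq) (auto simp: True T_def)
    next
      case False
      have "continuous_map X Z (\<lambda>x. s (x, b))"
        using s ab unfolding sep_cont_def by blast
      then have "continuous_map (subtopology (prod_topology X Y) (T i)) Z ((\<lambda>x. s (x, b)) \<circ> fst)"
        by (rule continuous_map_compose[OF continuous_map_from_subtopology[OF continuous_map_fst]])
      then show ?thesis
        by (rule continuous_map_eq) (auto simp: False T_def)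
    qed
    moreover have "cross X Y p \<inter> T i = T i"
      by (cases i) (auto simp: cross)
    ultimately show "continuous_map (subtopology (subtopology (prod_topology X Y) (cross X Y p)) (T i)) Z s"
      by (simp add: subtopology_subtopology)
  qed (auto simp: cross)
qed

lemma cross_set_around_point:
  assumes s: "s \<in> sep_cont X Y Z" and "t1_space X" "t1_space Y" "regular_space Z"
    and p: "p \<in> topspace X \<times> topspace Y" and W: "openin Z W" "s p \<in> W"
  obtains A where "A \<in> cross_sets X Y" "p \<in> A" "s ` A \<subseteq> W"
proof -
  let ?P = "prod_topology X Y" and ?C = "cross X Y p"
  have "closedin Z (topspace Z - W)" "s p \<in> topspace Z - (topspace Z - W)"
    using W openin_subset by auto
  then obtain U where U: "openin Z U" "s p \<in> U" "disjnt (topspace Z - W) (Z closure_of U)"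
    using \<open>regular_space Z\<close> unfolding regular_space by blast
  then have clU: "Z closure_of U \<subseteq> W"
    using closure_of_subset_topspace by (fastforce simp: disjnt_def)
  have cs: "continuous_map (subtopology ?P ?C) Z s"
    using continuous_map_on_cross[OF s \<open>t1_space X\<close> \<open>t1_space Y\<close> p] .
  define G where "G = {q \<in> topspace (subtopology ?P ?C). s q \<in> U}"
  have G: "openin (subtopology ?P ?C) G"
    unfolding G_def using cs U(1) by (rule openin_continuous_map_preimage)
  have GC: "G \<subseteq> ?C"
    by (auto simp: G_def)
  have pG: "p \<in> G"
    using p U(2) by (cases p) (auto simp: G_def cross_def)
  define A where "A = (?P closure_of G) \<inter> ?C"
  have "A \<in> cross_sets X Y"
    unfolding cross_sets_def A_def using p G by blast
  moreover have "p \<in> A"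
    using pG GC closure_of_subset[of G ?P] by (auto simp: A_def G_def)
  moreover have "s ` A \<subseteq> W"
  proof -
    have "A = subtopology ?P ?C closure_of G"
      using GC by (simp add: A_def closure_of_subtopology Int_absorb2 inf_commute)
    then have "s ` A \<subseteq> Z closure_of (s ` G)"
      using continuous_map_image_closure_subset[OF cs] by blast
    also have "\<dots> \<subseteq> Z closure_of U"
      by (intro closure_of_mono) (auto simp: G_def)
    finally show ?thesis
      using clU by blast
  qed
  ultimately show ?thesis
    using that by blast
qed

lemma continuous_map_eval_cross_open_topology:
  assumes "t1_space X" "t1_space Y" "regular_space Z" and p: "p \<in> topspace X \<times> topspace Y"
  shows "continuous_map (cross_open_topology X Y Z) Z (\<lambda>s. s p)"
  unfolding continuous_map_def
proof (intro conjI allI impI)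
  show "(\<lambda>s. s p) \<in> topspace (cross_open_topology X Y Z) \<rightarrow> topspace Z"
    using p topspace_cross_open_topology_subset by (fastforce simp: sep_cont_def)
next
  fix W
  assume W: "openin Z W"
  show "openin (cross_open_topology X Y Z) {s \<in> topspace (cross_open_topology X Y Z). s p \<in> W}"
  proof (subst openin_subopen, intro ballI)
    fix s
    assume "s \<in> {s \<in> topspace (cross_open_topology X Y Z). s p \<in> W}"
    then have s: "s \<in> sep_cont X Y Z" "s p \<in> W"
      using topspace_cross_open_topology_subset by auto
    obtain A where A: "A \<in> cross_sets X Y" "p \<in> A" "s ` A \<subseteq> W"
      using cross_set_around_point[OF s(1) assms W s(2)] by blast
    let ?N = "{t \<in> sep_cont X Y Z. t ` A \<subseteq> W}"
    have N: "openin (cross_open_topology X Y Z) ?N"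
      unfolding cross_open_topology_def using A W by (intro topology_generated_by_Basis) blast
    moreover have "?N \<subseteq> {s \<in> topspace (cross_open_topology X Y Z). s p \<in> W}"
      using openin_subset[OF N] A(2) by blast
    ultimately show "\<exists>T. openin (cross_open_topology X Y Z) T \<and> s \<in> T
                       \<and> T \<subseteq> {s \<in> topspace (cross_open_topology X Y Z). s p \<in> W}"
      using s A by blast
  qed
qed

lemma continuous_map_restrict_cross_open_topology:
  assumes "t1_space X" "t1_space Y" "regular_space Z" "D \<subseteq> topspace X \<times> topspace Y"
  shows "continuous_map (cross_open_topology X Y Z) (product_topology (\<lambda>_. Z) D) (\<lambda>s. restrict s D)"
  unfolding continuous_map_componentwise
proof (intro conjI ballI)
  fix p
  assume p: "p \<in> D"
  then have "continuous_map (cross_open_topology X Y Z) Z (\<lambda>s. s p)"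
    using assms by (intro continuous_map_eval_cross_open_topology) auto
  then show "continuous_map (cross_open_topology X Y Z) Z (\<lambda>s. restrict s D p)"
    by (rule continuous_map_eq) (use p in auto)
qed auto

lemma inj_on_restrict_sep_cont:
  assumes "Hausdorff_space Z" "DX \<subseteq> topspace X"
    and DX: "X closure_of DX = topspace X" and DY: "Y closure_of DY = topspace Y"
  shows "inj_on (\<lambda>s. restrict s (DX \<times> DY)) (sep_cont X Y Z)"
proof (rule inj_onI)
  fix s t
  assume s: "s \<in> sep_cont X Y Z" and t: "t \<in> sep_cont X Y Z"
    and st: "restrict s (DX \<times> DY) = restrict t (DX \<times> DY)"
  have eq: "s (x, y) = t (x, y)" if "x \<in> DX" "y \<in> DY" for x y
  proof -
    have "restrict s (DX \<times> DY) (x, y) = restrict t (DX \<times> DY) (x, y)"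
      by (simp only: st)
    then show ?thesis
      using that by simp
  qed
  have eqX: "s (x, y) = t (x, y)" if x: "x \<in> DX" and y: "y \<in> topspace Y" for x y
  proof (rule forall_in_closure_of_eq[where f="\<lambda>y. s (x, y)" and g="\<lambda>y. t (x, y)"])
    show "y \<in> Y closure_of DY"
      using DY y by simp
    show "continuous_map Y Z (\<lambda>y. s (x, y))" "continuous_map Y Z (\<lambda>y. t (x, y))"
      using s t x \<open>DX \<subseteq> topspace X\<close> unfolding sep_cont_def by blast+
  qed (use assms eq x in auto)
  have "s (x, y) = t (x, y)" if x: "x \<in> topspace X" and y: "y \<in> topspace Y" for x y
  proof (rule forall_in_closure_of_eq[where f="\<lambda>x. s (x, y)" and g="\<lambda>x. t (x, y)"])
    show "x \<in> X closure_of DX"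
      using DX x by simp
    show "continuous_map X Z (\<lambda>x. s (x, y))" "continuous_map X Z (\<lambda>x. t (x, y))"
      using s t y unfolding sep_cont_def by blast+
  qed (use assms eqX y in auto)
  then show "s = t"
    using s t by (intro extensionalityI[where A="topspace X \<times> topspace Y"]) (auto simp: sep_cont_def)
qed

lemma Hausdorff_space_cross_open_topology:
  assumes "t1_space X" "t1_space Y" "Hausdorff_space Z" "regular_space Z"
  shows "Hausdorff_space (cross_open_topology X Y Z)"
proof (rule Hausdorff_space_injective_preimage)
  let ?D = "topspace X \<times> topspace Y"
  show "Hausdorff_space (product_topology (\<lambda>_. Z) ?D)"
    using assms by (simp add: Hausdorff_space_product_topology)
  show "continuous_map (cross_open_topology X Y Z) (product_topology (\<lambda>_. Z) ?D) (\<lambda>s. restrict s ?D)"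
    using assms by (intro continuous_map_restrict_cross_open_topology) auto
  show "inj_on (\<lambda>s. restrict s ?D) (topspace (cross_open_topology X Y Z))"
    using inj_on_restrict_sep_cont[OF \<open>Hausdorff_space Z\<close> order_refl closure_of_topspace closure_of_topspace]
    by (rule inj_on_subset[OF _ topspace_cross_open_topology_subset])
qed

lemma restrict_in_sep_cont:
  assumes "continuous_map (prod_topology X Y) Z f"
  shows "restrict f (topspace X \<times> topspace Y) \<in> sep_cont X Y Z"
  unfolding sep_cont_def
proof (intro CollectI conjI ballI)
  fix x
  assume x: "x \<in> topspace X"
  have "continuous_map Y Z (f \<circ> (\<lambda>y. (x, y)))"
    using assms x by (intro continuous_map_compose[OF _ assms] continuous_map_pairedI) auto
  then show "continuous_map Y Z (\<lambda>y. restrict f (topspace X \<times> topspace Y) (x, y))"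
    by (rule continuous_map_eq) (use x in auto)
next
  fix y
  assume y: "y \<in> topspace Y"
  have "continuous_map X Z (f \<circ> (\<lambda>x. (x, y)))"
    using assms y by (intro continuous_map_compose[OF _ assms] continuous_map_pairedI) auto
  then show "continuous_map X Z (\<lambda>x. restrict f (topspace X \<times> topspace Y) (x, y))"
    by (rule continuous_map_eq) (use y in auto)
next
  show "restrict f (topspace X \<times> topspace Y) \<in> topspace X \<times> topspace Y \<rightarrow> topspace Z"
    using continuous_map_image_subset_topspace[OF assms] by auto
qed simp

lemma openin_curried_image_subset_compactin:
  assumes F: "continuous_map (prod_topology K T) Z F" and A: "compactin T A" and W: "openin Z W"
  shows "openin K {k \<in> topspace K. (\<lambda>q. F (k, q)) ` A \<subseteq> W}"
proof (subst openin_subopen, intro ballI)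
  fix k
  assume "k \<in> {k \<in> topspace K. (\<lambda>q. F (k, q)) ` A \<subseteq> W}"
  then have k: "k \<in> topspace K" "(\<lambda>q. F (k, q)) ` A \<subseteq> W"
    by auto
  let ?W = "{z \<in> topspace (prod_topology K T). F z \<in> W}"
  have W': "openin (prod_topology K T) ?W"
    using F W by (rule openin_continuous_map_preimage)
  have "{k} \<times> A \<subseteq> ?W"
    using k compactin_subset_topspace[OF A] by auto
  then obtain U V where UV: "openin K U" "k \<in> U" "A \<subseteq> V" "U \<times> V \<subseteq> ?W"
    using tube_lemma_right[OF W' A k(1)] by blast
  moreover have "U \<subseteq> {k \<in> topspace K. (\<lambda>q. F (k, q)) ` A \<subseteq> W}"
  proof
    fix k'
    assume k': "k' \<in> U"
    have "F (k', q) \<in> W" if "q \<in> A" for q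
    proof -
      have "(k', q) \<in> ?W"
        using UV(3,4) k' that by blast
      then show ?thesis
        by simp
    qed
    then show "k' \<in> {k \<in> topspace K. (\<lambda>q. F (k, q)) ` A \<subseteq> W}"
      using k' openin_subset[OF UV(1)] by blast
  qed
  ultimately show "\<exists>U. openin K U \<and> k \<in> U \<and> U \<subseteq> {k \<in> topspace K. (\<lambda>q. F (k, q)) ` A \<subseteq> W}"
    by blast
qed

lemma continuous_map_curry_cross_open_topology:
  assumes "compact_space X" "compact_space Y" "t1_space X" "t1_space Y"
    and "topspace X \<noteq> {}" "topspace Y \<noteq> {}"
    and F: "continuous_map (prod_topology K (prod_topology X Y)) Z F"
  shows "continuous_map K (cross_open_topology X Y Z)
           (\<lambda>k. restrict (\<lambda>q. F (k, q)) (topspace X \<times> topspace Y))"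
    (is "continuous_map K _ ?E")
proof -
  have E: "?E k \<in> sep_cont X Y Z" if "k \<in> topspace K" for k
  proof (rule restrict_in_sep_cont)
    have "continuous_map (prod_topology X Y) Z (F \<circ> (\<lambda>q. (k, q)))"
      using that by (intro continuous_map_compose[OF _ F] continuous_map_pairedI) auto
    then show "continuous_map (prod_topology X Y) Z (\<lambda>q. F (k, q))"
      by (simp add: o_def)
  qed
  show ?thesis
    unfolding cross_open_topology_def
  proof (rule continuous_on_generated_topo)
    fix U
    assume "U \<in> {{s \<in> sep_cont X Y Z. s ` A \<subseteq> W} | A W. A \<in> cross_sets X Y \<and> openin Z W}"
    then obtain A W where U: "U = {s \<in> sep_cont X Y Z. s ` A \<subseteq> W}"
      and A: "A \<in> cross_sets X Y" and W: "openin Z W"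
      by blast
    have "closedin (prod_topology X Y) A"
      using closedin_cross_sets assms A by blast
    then have "compactin (prod_topology X Y) A"
      using assms by (simp add: closedin_compact_space compact_space_prod_topology)
    then have "openin K {k \<in> topspace K. (\<lambda>q. F (k, q)) ` A \<subseteq> W}"
      by (rule openin_curried_image_subset_compactin[OF F _ W])
    moreover have "?E -` U \<inter> topspace K = {k \<in> topspace K. (\<lambda>q. F (k, q)) ` A \<subseteq> W}"
      using E compactin_subset_topspace[OF \<open>compactin _ A\<close>] by (auto simp: U)
    ultimately show "openin K (?E -` U \<inter> topspace K)"
      by simp
  next
    show "?E ` topspace K \<subseteq> \<Union>{{s \<in> sep_cont X Y Z. s ` A \<subseteq> W} | A W. A \<in> cross_sets X Y \<and> openin Z W}"
      using E topspace_cross_open_topology[OF assms(5,6), of Z]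
      unfolding cross_open_topology_def by auto
  qed
qed

lemma geometric_dominated_suminf_tail:
  fixes f :: "nat \<Rightarrow> real"
  assumes f: "\<And>n. \<bar>f n\<bar> \<le> (1/2)^n"
  shows "\<bar>suminf f - (\<Sum>n<N. f n)\<bar> \<le> 2 * (1/2)^N"
proof -
  have sf: "summable f"
    by (rule summable_comparison_test'[OF summable_geometric[of "1/2"], where N=0]) (use f in auto)
  have sg: "summable (\<lambda>n. (1/2::real)^(n + N))"
    by (simp add: power_add summable_geometric summable_mult2)
  have sfN: "summable (\<lambda>n. norm (f (n + N)))"
    by (rule summable_comparison_test'[OF sg, where N=0]) (use f in auto)
  have "\<bar>suminf f - (\<Sum>n<N. f n)\<bar> = norm (\<Sum>n. f (n + N))"
    using suminf_split_initial_segment[OF sf, of N] by simp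
  also have "\<dots> \<le> (\<Sum>n. norm (f (n + N)))"
    by (rule summable_norm[OF sfN])
  also have "\<dots> \<le> (\<Sum>n. (1/2::real)^(n + N))"
    by (rule suminf_le[OF _ sfN sg]) (use f in auto)
  also have "\<dots> = (\<Sum>n. (1/2::real)^n) * (1/2)^N"
    by (simp add: power_add suminf_mult2[symmetric] summable_geometric)
  also have "\<dots> = 2 * (1/2)^N"
    by (simp add: suminf_geometric)
  finally show ?thesis .
qed

definition dyadic_series :: "(nat \<Rightarrow> 'k \<Rightarrow> real) \<Rightarrow> (nat \<Rightarrow> 'x \<Rightarrow> real) \<Rightarrow> 'k \<times> 'x \<Rightarrow> real"
  where "dyadic_series a \<psi> z = (\<Sum>n. (1/2)^n * a n (fst z) * \<psi> n (snd z))"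

lemma dyadic_term_bound:
  fixes a b :: real
  assumes "\<bar>a\<bar> \<le> 1" "\<bar>b\<bar> \<le> 1"
  shows "\<bar>(1/2)^n * a * b\<bar> \<le> (1/2)^n"
proof -
  have "\<bar>a\<bar> * \<bar>b\<bar> \<le> 1"
    using assms by (simp add: mult_le_one)
  then show ?thesis
    by (simp add: abs_mult mult.assoc mult_left_le)
qed

lemma continuous_map_dyadic_series:
  assumes a: "\<And>n k. \<bar>a n k\<bar> \<le> 1" and \<psi>: "\<And>n x. \<bar>\<psi> n x\<bar> \<le> 1"
    and ca: "\<And>n. continuous_map K euclideanreal (a n)"
    and c\<psi>: "\<And>n. continuous_map X euclideanreal (\<psi> n)"
  shows "continuous_map (prod_topology K X) euclideanreal (dyadic_series a \<psi>)"
proof -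
  define S where "S N z = (\<Sum>n<N. (1/2)^n * a n (fst z) * \<psi> n (snd z))" for N z
  have bound: "\<bar>(1/2)^n * a n k * \<psi> n x\<bar> \<le> (1/2)^n" for n k x
    using a \<psi> by (rule dyadic_term_bound)
  have "continuous_map (prod_topology K X) Met_TC.mtopology (dyadic_series a \<psi>)"
  proof (rule Met_TC.continuous_map_uniform_limit[where F=sequentially and f=S])
    have "continuous_map (prod_topology K X) euclideanreal (S N)" for N
    proof -
      have "continuous_map (prod_topology K X) euclideanreal (a n \<circ> fst)"
        "continuous_map (prod_topology K X) euclideanreal (\<psi> n \<circ> snd)" for n
        using ca c\<psi> by (auto intro: continuous_map_compose continuous_map_fst continuous_map_snd)
      then show ?thesis
        unfolding S_def[abs_def] o_def
        by (intro continuous_map_sum continuous_map_real_mult) auto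
    qed
    then show "\<forall>\<^sub>F N in sequentially. continuous_map (prod_topology K X) Met_TC.mtopology (S N)"
      by simp
  next
    fix \<epsilon> :: real
    assume "0 < \<epsilon>"
    then obtain N0 where N0: "(1/2::real)^N0 < \<epsilon>/2"
      using real_arch_pow_inv[of "\<epsilon>/2" "1/2"] by auto
    show "\<forall>\<^sub>F N in sequentially. \<forall>z\<in>topspace (prod_topology K X).
            dyadic_series a \<psi> z \<in> UNIV \<and> dist (S N z) (dyadic_series a \<psi> z) < \<epsilon>"
    proof (rule eventually_sequentiallyI[of N0], intro ballI conjI UNIV_I)
      fix N z
      assume "N0 \<le> N"
      then have "(1/2::real)^N \<le> (1/2)^N0"
        by (rule power_decreasing) auto
      then have "2 * (1/2::real)^N < \<epsilon>"
        using N0 by linarith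
      moreover have "\<bar>dyadic_series a \<psi> z - S N z\<bar> \<le> 2 * (1/2)^N"
        unfolding dyadic_series_def S_def by (rule geometric_dominated_suminf_tail[OF bound])
      ultimately show "dist (S N z) (dyadic_series a \<psi> z) < \<epsilon>"
        by (simp add: dist_real_def abs_minus_commute)
    qed
  qed simp
  then show ?thesis
    by simp
qed

lemma dyadic_series_eq_imp_coefficients_eq:
  assumes zero: "\<And>m n. m < n \<Longrightarrow> \<psi> n (p m) = 0" and one: "\<And>m. \<psi> m (p m) = 1"
    and eq: "\<And>m. dyadic_series a \<psi> (k, p m) = dyadic_series a \<psi> (k', p m)"
  shows "a m k = a m k'"
proof (induction m rule: less_induct)
  case (less m)
  have finite: "dyadic_series a \<psi> (l, p m) = (\<Sum>n<m. (1/2)^n * a n l * \<psi> n (p m)) + (1/2)^m * a m l"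
    for l
  proof -
    have "dyadic_series a \<psi> (l, p m) = (\<Sum>n<Suc m. (1/2)^n * a n l * \<psi> n (p m))"
      unfolding dyadic_series_def fst_conv snd_conv by (rule suminf_finite) (auto simp: zero)
    then show ?thesis
      by (simp add: one)
  qed
  have "(\<Sum>n<m. (1/2)^n * a n k * \<psi> n (p m)) = (\<Sum>n<m. (1/2)^n * a n k' * \<psi> n (p m))"
    by (rule sum.cong) (auto simp: less)
  then show ?case
    using eq[of m] finite[of k] finite[of k'] by simp
qed

lemma separable_metrizable_separating_sequence:
  assumes "separable_space K" "metrizable_space K"
  obtains a :: "nat \<Rightarrow> 'a \<Rightarrow> real"
  where "\<And>n. continuous_map K euclideanreal (a n)" "\<And>n k. \<bar>a n k\<bar> \<le> 1"
    and "\<And>k k'. k \<in> topspace K \<Longrightarrow> k' \<in> topspace K \<Longrightarrow> (\<And>n. a n k = a n k') \<Longrightarrow> k = k'"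
proof (cases "topspace K = {}")
  case True
  then show ?thesis
    using that[of "\<lambda>_ _. 0"] by auto
next
  case False
  obtain m where K: "K = mtopology_of m"
    using assms(2) by (rule metrizable_spaceE)
  interpret Metric_space "mspace m" "mdist m" by simp
  obtain C where C: "countable C" "C \<subseteq> mspace m" "mtopology closure_of C = mspace m"
    using assms(1) unfolding separable_space_def by (auto simp: K mtopology_of_def)
  have "C \<noteq> {}"
    using False C(3) by (auto simp: K mtopology_of_def)
  define c where "c = from_nat_into C"
  have cC: "c n \<in> C" for n
    using from_nat_into[OF \<open>C \<noteq> {}\<close>] by (simp add: c_def)
  define a where "a n k = min 1 (mdist m k (c n))" for n k
  show ?thesis
  proof (rule that)
    fix n
    have "continuous_map K euclideanreal (\<lambda>k. mdist m k (c n))"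
      using C(2) cC by (intro continuous_map_mdist) (auto simp: K)
    then show "continuous_map K euclideanreal (a n)"
      unfolding a_def[abs_def] by (intro continuous_map_real_min) auto
  next
    fix n k
    show "\<bar>a n k\<bar> \<le> 1"
      by (simp add: a_def)
  next
    fix k k'
    assume k: "k \<in> topspace K" and k': "k' \<in> topspace K" and eq: "\<And>n. a n k = a n k'"
    show "k = k'"
    proof (rule ccontr)
      assume "k \<noteq> k'"
      define r where "r = min 1 (mdist m k k' / 2)"
      have "r > 0"
        using \<open>k \<noteq> k'\<close> k k' by (simp add: r_def K)
      then obtain y where y: "y \<in> C" "mdist m k y < r"
        using C(3) k by (force simp: K metric_closure_of)
      then obtain n where n: "c n = y"
        using from_nat_into_surj[OF C(1)] by (auto simp: c_def)
      have "mdist m k k' \<le> mdist m k y + mdist m y k'"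
        using C(2) k k' y by (intro triangle) (auto simp: K)
      then have "a n k < a n k'"
        using y n by (auto simp: a_def r_def commute)
      then show False
        using eq[of n] by simp
    qed
  qed
qed

lemma metrizable_infinite_bump_sequence:
  assumes "metrizable_space X" "infinite (topspace X)"
  obtains p :: "nat \<Rightarrow> 'a" and \<psi> :: "nat \<Rightarrow> 'a \<Rightarrow> real"
  where "range p \<subseteq> topspace X" "\<And>n. continuous_map X euclideanreal (\<psi> n)" "\<And>n x. \<bar>\<psi> n x\<bar> \<le> 1"
    and "\<And>m n. m < n \<Longrightarrow> \<psi> n (p m) = 0" "\<And>n. \<psi> n (p n) = 1"
proof -
  obtain m where X: "X = mtopology_of m"
    using assms(1) by (rule metrizable_spaceE)
  interpret Metric_space "mspace m" "mdist m" by simp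
  obtain p :: "nat \<Rightarrow> 'a" where p: "inj p" "range p \<subseteq> mspace m"
    using infinite_countable_subset[OF assms(2)] by (auto simp: X)
  have dpos: "mdist m (p n) (p j) > 0" if "j \<noteq> n" for j n
  proof (rule mdist_pos_less)
    show "p n \<noteq> p j"
      using that p(1) by (auto dest: injD)
  qed (use p(2) in auto)
  define \<psi> where "\<psi> n x = (\<Prod>j<n. min 1 (mdist m x (p j) / mdist m (p n) (p j)))" for n x
  show ?thesis
  proof (rule that)
    show "range p \<subseteq> topspace X"
      using p(2) by (simp add: X)
  next
    fix n
    have "continuous_map X euclideanreal (\<lambda>x. mdist m x (p j) / mdist m (p n) (p j))" if "j < n" for j
      using p(2) dpos[of j n] that
      by (intro continuous_map_real_divide continuous_map_mdist) (auto simp: X)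
    then show "continuous_map X euclideanreal (\<psi> n)"
      unfolding \<psi>_def[abs_def] by (intro continuous_map_prod continuous_map_real_min) auto
  next
    fix n x
    have "0 \<le> \<psi> n x" "\<psi> n x \<le> 1"
      unfolding \<psi>_def by (simp_all add: prod_nonneg prod_le_1)
    then show "\<bar>\<psi> n x\<bar> \<le> 1"
      by simp
  next
    fix j n :: nat
    assume "j < n"
    then show "\<psi> n (p j) = 0"
      unfolding \<psi>_def using p(2) by (intro prod_zero bexI[of _ j]) (auto simp: range_subsetD)
  next
    fix n
    show "\<psi> n (p n) = 1"
      unfolding \<psi>_def using dpos by (intro prod.neutral ballI) (simp add: less_imp_neq order_less_imp_not_eq2)
  qed
qed

lemma separating_kernel:
  assumes "separable_space K" "metrizable_space K" "metrizable_space X" "infinite (topspace X)"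
  obtains G where "continuous_map (prod_topology K X) euclideanreal G"
    and "\<And>k k'. k \<in> topspace K \<Longrightarrow> k' \<in> topspace K
                 \<Longrightarrow> (\<And>x. x \<in> topspace X \<Longrightarrow> G (k, x) = G (k', x)) \<Longrightarrow> k = k'"
proof -
  obtain a :: "nat \<Rightarrow> 'a \<Rightarrow> real"
    where a: "\<And>n. continuous_map K euclideanreal (a n)" "\<And>n k. \<bar>a n k\<bar> \<le> 1"
    and sep: "\<And>k k'. k \<in> topspace K \<Longrightarrow> k' \<in> topspace K \<Longrightarrow> (\<And>n. a n k = a n k') \<Longrightarrow> k = k'"
    using separable_metrizable_separating_sequence[OF assms(1,2)] by blast
  obtain p :: "nat \<Rightarrow> 'b" and \<psi> where p: "range p \<subseteq> topspace X"
    and \<psi>: "\<And>n. continuous_map X euclideanreal (\<psi> n)" "\<And>n x. \<bar>\<psi> n x\<bar> \<le> 1"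
    and zero: "\<And>m n. m < n \<Longrightarrow> \<psi> n (p m) = 0" and one: "\<And>n. \<psi> n (p n) = 1"
    using metrizable_infinite_bump_sequence[OF assms(3,4)] by blast
  show ?thesis
  proof (rule that[of "dyadic_series a \<psi>"])
    show "continuous_map (prod_topology K X) euclideanreal (dyadic_series a \<psi>)"
      by (rule continuous_map_dyadic_series[OF a(2) \<psi>(2) a(1) \<psi>(1)])
  next
    fix k k'
    assume k: "k \<in> topspace K" "k' \<in> topspace K"
      and eq: "\<And>x. x \<in> topspace X \<Longrightarrow> dyadic_series a \<psi> (k, x) = dyadic_series a \<psi> (k', x)"
    have "a n k = a n k'" for n
    proof (rule dyadic_series_eq_imp_coefficients_eq
        [where \<psi>=\<psi> and p=p and a=a and k=k and k'=k', OF zero one])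
      show "dyadic_series a \<psi> (k, p m) = dyadic_series a \<psi> (k', p m)" for m
        using p by (intro eq) auto
    qed
    then show "k = k'"
      by (rule sep[OF k])
  qed
qed

lemma metrizable_space_of_embedding_cross_open_topology:
  assumes "separable_space X" "separable_space Y" "t1_space X" "t1_space Y" "metrizable_space Z"
    and "compact_space K" and f: "embedding_map K (cross_open_topology X Y Z) f"
  shows "metrizable_space K"
proof -
  obtain DX where DX: "countable DX" "DX \<subseteq> topspace X" "X closure_of DX = topspace X"
    using assms(1) unfolding separable_space_def by blast
  obtain DY where DY: "countable DY" "DY \<subseteq> topspace Y" "Y closure_of DY = topspace Y"
    using assms(2) unfolding separable_space_def by blast
  let ?D = "DX \<times> DY" and ?r = "\<lambda>s. restrict s (DX \<times> DY)"
  have hf: "homeomorphic_map K (subtopology (cross_open_topology X Y Z) (f ` topspace K)) f"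
    using f by (simp add: embedding_map_def)
  have "continuous_map K (subtopology (cross_open_topology X Y Z) (f ` topspace K)) f"
    by (rule homeomorphic_imp_continuous_map[OF hf])
  then have cf: "continuous_map K (cross_open_topology X Y Z) f"
    by (simp add: continuous_map_in_subtopology)
  have "countable ?D"
    using DX(1) DY(1) by simp
  then have "metrizable_space (product_topology (\<lambda>_. Z) ?D)"
    unfolding metrizable_space_product_topology
    by (intro disjI2 conjI ballI assms(5) countable_subset[OF _ \<open>countable ?D\<close>]) auto
  moreover have "continuous_map K (product_topology (\<lambda>_. Z) ?D) (?r \<circ> f)"
    using DX(2) DY(2)
    by (intro continuous_map_compose[OF cf] continuous_map_restrict_cross_open_topology
        assms(3,4) metrizable_imp_regular_space[OF assms(5)]) auto
  moreover have "inj_on (?r \<circ> f) (topspace K)"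
  proof (rule comp_inj_on)
    show "inj_on f (topspace K)"
      by (rule homeomorphic_imp_injective_map[OF hf])
    have "f ` topspace K \<subseteq> sep_cont X Y Z"
      using continuous_map_image_subset_topspace[OF cf] topspace_cross_open_topology_subset by blast
    then show "inj_on ?r (f ` topspace K)"
      using inj_on_restrict_sep_cont[OF metrizable_imp_Hausdorff_space[OF assms(5)] DX(2,3) DY(3)]
      by (rule inj_on_subset[rotated])
  qed
  ultimately show ?thesis
    using assms(6) metrizable_space_of_continuous_injective by blast
qed

lemma embedding_into_cross_open_topology:
  assumes "compact_space X" "compact_space Y" "t1_space X" "t1_space Y"
    and "metrizable_space X" "infinite (topspace X)" "topspace Y \<noteq> {}"
    and "Hausdorff_space Z" "regular_space Z" and h: "continuous_map euclideanreal Z h" "inj h"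
    and "compact_space K" "metrizable_space K"
  obtains f where "embedding_map K (cross_open_topology X Y Z) f"
proof -
  obtain G where G: "continuous_map (prod_topology K X) euclideanreal G"
    and sep: "\<And>k k'. k \<in> topspace K \<Longrightarrow> k' \<in> topspace K
               \<Longrightarrow> (\<And>x. x \<in> topspace X \<Longrightarrow> G (k, x) = G (k', x)) \<Longrightarrow> k = k'"
    using separating_kernel compact_metrizable_imp_separable_space assms by metis
  define F where "F z = h (G (fst z, fst (snd z)))" for z :: "'d \<times> 'a \<times> 'b"
  define E where "E k = restrict (\<lambda>q. F (k, q)) (topspace X \<times> topspace Y)" for k
  have "continuous_map (prod_topology K (prod_topology X Y)) Z F"
  proof -
    have "continuous_map (prod_topology K (prod_topology X Y)) (prod_topology K X) (\<lambda>z. (fst z, fst (snd z)))"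
      by (intro continuous_map_pairedI continuous_map_fst continuous_map_compose[OF continuous_map_snd continuous_map_fst, unfolded o_def])
    then show ?thesis
      unfolding F_def[abs_def]
      using continuous_map_compose[OF continuous_map_compose[OF _ G] h(1)] by (simp add: o_def)
  qed
  then have "continuous_map K (cross_open_topology X Y Z) E"
    unfolding E_def using assms by (intro continuous_map_curry_cross_open_topology) auto
  moreover note \<open>compact_space K\<close>
  moreover have "Hausdorff_space (cross_open_topology X Y Z)"
    using assms by (intro Hausdorff_space_cross_open_topology)
  moreover have "inj_on E (topspace K)"
  proof (rule inj_onI)
    fix k k'
    assume k: "k \<in> topspace K" "k' \<in> topspace K" and eq: "E k = E k'"
    show "k = k'"
    proof (rule sep[OF k])
      fix x
      assume x: "x \<in> topspace X"
      obtain y where y: "y \<in> topspace Y"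
        using assms(7) by blast
      have "h (G (k, x)) = h (G (k', x))"
        using fun_cong[OF eq, of "(x, y)"] x y by (simp add: E_def F_def)
      then show "G (k, x) = G (k', x)"
        using h(2) by (simp add: inj_eq)
    qed
  qed
  ultimately show ?thesis
    by (intro that continuous_imp_embedding_map)
qed

theorem corollary7p2:
  fixes X :: "'a topology" and Y :: "'b topology" and Z :: "'c topology"
    and K :: "'d topology"
  assumes "compact_space X" "Hausdorff_space X" "metrizable_space X" "infinite (topspace X)"
    and "compact_space Y" "Hausdorff_space Y" "metrizable_space Y" "infinite (topspace Y)"
    and "metrizable_space Z"
    and "\<exists>T. subtopology Z T homeomorphic_space euclideanreal"
    and "compact_space K" "Hausdorff_space K"
  shows "(\<exists>f. embedding_map K (cross_open_topology X Y Z) f) \<longleftrightarrow> metrizable_space K"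
proof
  assume "\<exists>f. embedding_map K (cross_open_topology X Y Z) f"
  then show "metrizable_space K"
    using metrizable_space_of_embedding_cross_open_topology compact_metrizable_imp_separable_space
      Hausdorff_imp_t1_space assms by metis
next
  assume "metrizable_space K"
  obtain T where "euclideanreal homeomorphic_space subtopology Z T"
    using assms(10) homeomorphic_space_sym by blast
  then obtain h where "homeomorphic_map euclideanreal (subtopology Z T) h"
    using homeomorphic_space by blast
  then have "continuous_map euclideanreal Z h" "inj h"
    using homeomorphic_imp_continuous_map homeomorphic_imp_injective_map continuous_map_in_subtopology
    by fastforce+
  then show "\<exists>f. embedding_map K (cross_open_topology X Y Z) f"
    using embedding_into_cross_open_topology[of X Y Z h K] \<open>metrizable_space K\<close> assms
      Hausdorff_imp_t1_space metrizable_imp_Hausdorff_space metrizable_imp_regular_space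
    by (metis ex_in_conv finite.emptyI)
qed

end
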